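(* Let $k\ge 2$ and $\pi=\pi_1\cdots\pi_n\in S_n(123,\,k(k-1)\cdots 21(k+1))$ with $n\ge 1$. Then the entry $n$ occupies one of the positions $1,2,\dots,k$. Moreover, let $\alpha_\pi$ be the smallest index $j\in\{2,\dots,n\}$ with $\pi_{j-1}<\pi_j$, and $\alpha_\pi=n+1$ if no such index exists. Then the active sites of $\pi$ (with respect to the class $S(123,\,k(k-1)\cdots 21(k+1))$) are exactly the first $\min(\alpha_\pi,k)$ sites of $\pi$. *)

theory Defs
  imports Main
begin

text \<open>Permutations of [n] in one-line notation, as lists (0-indexed lists,
  entry pi_i is the list element at index i-1).\<close>
definition is_perm :: "nat \<Rightarrow> nat list \<Rightarrow> bool" where
  "is_perm n p \<longleftrightarrow> length p = n \<and> set p = {1..n}"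

definition contains :: "nat list \<Rightarrow> nat list \<Rightarrow> bool" where
  "contains p s \<longleftrightarrow> (\<exists>f :: nat \<Rightarrow> nat.
      (\<forall>a b. a < b \<and> b < length s \<longrightarrow> f a < f b) \<and>
      (\<forall>a < length s. f a < length p) \<and>
      (\<forall>a < length s. \<forall>b < length s. (s ! a < s ! b \<longleftrightarrow> p ! (f a) < p ! (f b))))"

definition avoids :: "nat list \<Rightarrow> nat list \<Rightarrow> bool" where
  "avoids p s \<longleftrightarrow> \<not> contains p s"

definition dec_pat :: "nat \<Rightarrow> nat list" where
  "dec_pat k = rev [1..<k+1] @ [k+1]"

definition in_class :: "nat \<Rightarrow> nat \<Rightarrow> nat list \<Rightarrow> bool" where
  "in_class k n p \<longleftrightarrow> is_perm n p \<and> avoids p [1,2,3] \<and> avoids p (dec_pat k)"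

text \<open>Inserting the new maximum n+1 into site i (1 \<le> i \<le> n+1): site i is
  immediately before pi_i (site n+1 is at the end).\<close>
definition insert_site :: "nat list \<Rightarrow> nat \<Rightarrow> nat list" where
  "insert_site p i = take (i - 1) p @ [length p + 1] @ drop (i - 1) p"

definition active_sites :: "nat \<Rightarrow> nat list \<Rightarrow> nat set" where
  "active_sites k p = {i. 1 \<le> i \<and> i \<le> length p + 1 \<and>
      in_class k (length p + 1) (insert_site p i)}"

definition alpha :: "nat list \<Rightarrow> nat" where
  "alpha p = (if \<exists>j\<in>{2..length p}. p ! (j - 2) < p ! (j - 1)
              then (LEAST j. j \<in> {2..length p} \<and> p ! (j - 2) < p ! (j - 1))
              else length p + 1)"

end

theory Submission
  imports Defs
begin

text \<open>Inserting a new maximum m into a list as xs @ m # ys: for a pattern s @ [c] ending in its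
  maximum, an occurrence in xs @ m # ys that is not already one in xs @ ys must use m, and m can
  only play the role of c. Hence, if xs @ ys avoids s @ [c], then xs @ m # ys avoids s @ [c] iff
  xs avoids s. Both patterns of the class have this shape, 123 = 12 3 and k...21(k+1) = k...21 (k+1).
  So the entries in front of n avoid 12, i.e. decrease, and, avoiding k...21, there are fewer than
  k of them. Likewise site i is active iff the first i - 1 entries decrease (i \<le> alpha) and are
  fewer than k (i \<le> k).\<close>

definition pattern_embedding :: "(nat \<Rightarrow> nat) \<Rightarrow> nat list \<Rightarrow> nat list \<Rightarrow> bool" where
  "pattern_embedding f s p \<longleftrightarrow>
     (\<forall>a b. a < b \<and> b < length s \<longrightarrow> f a < f b) \<and>
     (\<forall>a < length s. f a < length p) \<and>
     (\<forall>a < length s. \<forall>b < length s. (s ! a < s ! b \<longleftrightarrow> p ! (f a) < p ! (f b)))"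

lemma contains_iff_embedding: "contains p s \<longleftrightarrow> (\<exists>f. pattern_embedding f s p)"
  by (simp add: contains_def pattern_embedding_def)

lemma pattern_embeddingD:
  assumes "pattern_embedding f s p"
  shows "a < b \<Longrightarrow> b < length s \<Longrightarrow> f a < f b"
    and "a < length s \<Longrightarrow> f a < length p"
    and "a < length s \<Longrightarrow> b < length s \<Longrightarrow> s ! a < s ! b \<longleftrightarrow> p ! f a < p ! f b"
  using assms unfolding pattern_embedding_def by blast+

lemma contains_length_le:
  assumes "contains p s"
  shows "length s \<le> length p"
proof -
  obtain f where f: "pattern_embedding f s p"
    using assms contains_iff_embedding by blast
  have "inj_on f {..<length s}"
    using f unfolding pattern_embedding_def inj_on_def by (metis lessThan_iff linorder_neq_iff)
  moreover have "f ` {..<length s} \<subseteq> {..<length p}"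
    using f unfolding pattern_embedding_def by auto
  ultimately have "card {..<length s} \<le> card {..<length p}"
    by (intro card_inj_on_le) auto
  then show ?thesis
    by simp
qed

lemma contains_12_iff: "contains xs [1, 2] \<longleftrightarrow> \<not> sorted_wrt (\<ge>) xs"
proof
  assume "contains xs [1, 2]"
  then obtain f where f: "pattern_embedding f [1, 2] xs"
    using contains_iff_embedding by blast
  have "f 0 < f 1" "f 1 < length xs" "xs ! f 0 < xs ! f 1"
    using pattern_embeddingD(1,3)[OF f, of 0 1] pattern_embeddingD(2)[OF f, of 1] by simp_all
  then show "\<not> sorted_wrt (\<ge>) xs"
    unfolding sorted_wrt_iff_nth_less by (metis leD)
next
  assume "\<not> sorted_wrt (\<ge>) xs"
  then obtain a b where "a < b" "b < length xs" "xs ! a < xs ! b"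
    by (auto simp: sorted_wrt_iff_nth_less not_le)
  then have "pattern_embedding (\<lambda>i. if i = 0 then a else b) [1, 2] xs"
    unfolding pattern_embedding_def by (auto simp: less_Suc_eq)
  then show "contains xs [1, 2]"
    using contains_iff_embedding by blast
qed

lemma nth_insert_other:
  assumes "i \<noteq> length xs"
  shows "(xs @ m # ys) ! i = (xs @ ys) ! (if i < length xs then i else i - 1)"
  using assms by (auto simp: nth_append nth_Cons')

lemma contains_append_greater:
  assumes "contains xs s" and "\<forall>x\<in>set s. x < c" and "\<forall>x\<in>set xs. x < m"
  shows "contains (xs @ m # ys) (s @ [c])"
proof -
  obtain f where f: "pattern_embedding f s xs"
    using assms(1) contains_iff_embedding by blast
  define g where "g a = (if a < length s then f a else length xs)" for a
  have val: "(xs @ m # ys) ! g a = (if a < length s then xs ! f a else m)" for a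
    using pattern_embeddingD(2)[OF f, of a] by (simp add: g_def nth_append)
  have below: "a < length s \<Longrightarrow> s ! a < c \<and> xs ! f a < m" for a
    using assms(2,3) pattern_embeddingD(2)[OF f, of a] by simp
  have "pattern_embedding g (s @ [c]) (xs @ m # ys)"
    unfolding pattern_embedding_def
  proof (intro conjI allI impI)
    fix a b assume "a < b \<and> b < length (s @ [c])"
    then show "g a < g b"
      using pattern_embeddingD(1)[OF f, of a b] pattern_embeddingD(2)[OF f, of a]
      by (auto simp: g_def less_Suc_eq)
  next
    fix a assume "a < length (s @ [c])"
    then show "g a < length (xs @ m # ys)"
      using pattern_embeddingD(2)[OF f, of a] by (auto simp: g_def)
  next
    fix a b assume "a < length (s @ [c])" "b < length (s @ [c])"
    then show "(s @ [c]) ! a < (s @ [c]) ! b \<longleftrightarrow> (xs @ m # ys) ! g a < (xs @ m # ys) ! g b"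
      using pattern_embeddingD(3)[OF f, of a b] below[of a] below[of b]
      unfolding val by (auto simp: nth_append less_Suc_eq)
  qed
  then show ?thesis
    using contains_iff_embedding by blast
qed

lemma contains_insert_greaterD:
  assumes "contains (xs @ m # ys) (s @ [c])" and "\<not> contains (xs @ ys) (s @ [c])"
    and "\<forall>x\<in>set (xs @ ys). x < m" and "\<forall>x\<in>set s. x < c"
  shows "contains xs s"
proof -
  let ?q = "xs @ m # ys" and ?t = "s @ [c]"
  obtain f where f: "pattern_embedding f ?t ?q"
    using assms(1) contains_iff_embedding by blast
  have hit: "\<exists>a < length ?t. f a = length xs"
  proof (rule ccontr)
    assume miss: "\<not> ?thesis"
    define g where "g a = (if f a < length xs then f a else f a - 1)" for a
    have val: "?q ! f a = (xs @ ys) ! g a" if "a < length ?t" for a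
      using miss that nth_insert_other[of "f a" xs m ys] by (auto simp: g_def)
    have "pattern_embedding g ?t (xs @ ys)"
      unfolding pattern_embedding_def
    proof (intro conjI allI impI)
      fix a b assume "a < b \<and> b < length ?t"
      then have "f a < f b" "f a \<noteq> length xs" "f b \<noteq> length xs"
        using miss pattern_embeddingD(1)[OF f, of a b] by auto
      then show "g a < g b"
        unfolding g_def by auto
    next
      fix a assume "a < length ?t"
      then show "g a < length (xs @ ys)"
        using miss pattern_embeddingD(2)[OF f, of a] unfolding g_def by force
    next
      fix a b assume "a < length ?t" "b < length ?t"
      then show "?t ! a < ?t ! b \<longleftrightarrow> (xs @ ys) ! g a < (xs @ ys) ! g b"
        using pattern_embeddingD(3)[OF f, of a b] val by simp
    qed
    then show False
      using assms(2) contains_iff_embedding by blast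
  qed
  have last_hit: "f (length s) = length xs"
  proof (rule ccontr)
    assume last_miss: "f (length s) \<noteq> length xs"
    obtain a where a: "a < length s" "f a = length xs"
      using hit last_miss by (auto simp: less_Suc_eq)
    have "?q ! f a < ?q ! f (length s)"
      using pattern_embeddingD(3)[OF f, of a "length s"] a assms(4) by (simp add: nth_append)
    moreover have "?q ! f (length s) \<in> set (xs @ ys)"
      unfolding nth_insert_other[OF last_miss]
      using last_miss pattern_embeddingD(2)[OF f, of "length s"] by (intro nth_mem) auto
    ultimately show False
      using a(2) assms(3) by (metis nth_append_length less_asym)
  qed
  have inside: "f a < length xs" if "a < length s" for a
    using pattern_embeddingD(1)[OF f, of a "length s"] that last_hit by simp
  have "pattern_embedding f s xs"
    unfolding pattern_embedding_def
  proof (intro conjI allI impI)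
    fix a b assume "a < b \<and> b < length s"
    then show "f a < f b"
      using pattern_embeddingD(1)[OF f, of a b] by simp
  next
    fix a b assume "a < length s" "b < length s"
    then show "s ! a < s ! b \<longleftrightarrow> xs ! f a < xs ! f b"
      using pattern_embeddingD(3)[OF f, of a b] inside[of a] inside[of b] by (simp add: nth_append)
  qed (use inside in simp)
  then show ?thesis
    using contains_iff_embedding by blast
qed

lemma avoids_insert_greater_iff:
  assumes "avoids (xs @ ys) (s @ [c])" and "\<forall>x\<in>set (xs @ ys). x < m" and "\<forall>x\<in>set s. x < c"
  shows "avoids (xs @ m # ys) (s @ [c]) \<longleftrightarrow> avoids xs s"
  using assms contains_append_greater[of xs s c m ys] contains_insert_greaterD[of xs m ys s c]
  unfolding avoids_def by auto

lemma sorted_wrt_greater_nth_less_iff: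
  fixes xs :: "'a :: order list"
  assumes "sorted_wrt (>) xs" and "a < length xs" and "b < length xs"
  shows "xs ! a < xs ! b \<longleftrightarrow> b < a"
proof (cases a b rule: linorder_cases)
  case less
  then have "xs ! b < xs ! a"
    using assms by (simp add: sorted_wrt_iff_nth_less)
  then show ?thesis
    using less by simp
next
  case greater
  then have "xs ! a < xs ! b"
    using assms by (simp add: sorted_wrt_iff_nth_less)
  then show ?thesis
    using greater by simp
qed simp

lemma contains_decreasing:
  assumes "sorted_wrt (>) xs" and "sorted_wrt (>) s" and "length s \<le> length xs"
  shows "contains xs s"
proof -
  have "pattern_embedding id s xs"
    using assms sorted_wrt_greater_nth_less_iff[of s] sorted_wrt_greater_nth_less_iff[of xs]
    unfolding pattern_embedding_def by auto
  then show ?thesis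
    using contains_iff_embedding by blast
qed

lemma sorted_wrt_greater_if_distinct:
  fixes xs :: "'a :: linorder list"
  assumes "sorted_wrt (\<ge>) xs" and "distinct xs"
  shows "sorted_wrt (>) xs"
  using assms strict_sorted_iff[of "rev xs"] by (simp add: sorted_wrt_rev)

lemma contains_rev_upt_iff:
  assumes "sorted_wrt (>) xs"
  shows "contains xs (rev [1..<k + 1]) \<longleftrightarrow> k \<le> length xs"
  using contains_length_le[of xs "rev [1..<k + 1]"] contains_decreasing[OF assms, of "rev [1..<k + 1]"]
  by (auto simp: sorted_wrt_rev simp del: upt_Suc)

lemma alpha_eq_Least:
  assumes "j \<in> {2..length p}" and "p ! (j - 2) < p ! (j - 1)"
  shows "alpha p = (LEAST j. j \<in> {2..length p} \<and> p ! (j - 2) < p ! (j - 1))"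
  unfolding alpha_def using assms by (intro if_P) blast

lemma alpha_ascent:
  assumes "j \<in> {2..length p}" and "p ! (j - 2) < p ! (j - 1)"
  shows "alpha p \<in> {2..j}" and "alpha p \<le> length p" and "p ! (alpha p - 2) < p ! (alpha p - 1)"
proof -
  let ?ascent = "\<lambda>j. j \<in> {2..length p} \<and> p ! (j - 2) < p ! (j - 1)"
  have "?ascent j"
    using assms by blast
  then have "?ascent (LEAST j. ?ascent j)" and "(LEAST j. ?ascent j) \<le> j"
    by (rule LeastI, rule Least_le)
  then show "alpha p \<in> {2..j}" and "alpha p \<le> length p" and "p ! (alpha p - 2) < p ! (alpha p - 1)"
    using alpha_eq_Least[OF assms] by auto
qed

lemma alpha_no_ascent:
  assumes "\<not> (\<exists>j\<in>{2..length p}. p ! (j - 2) < p ! (j - 1))"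
  shows "alpha p = length p + 1"
  using assms by (simp add: alpha_def)

lemma alpha_le_length: "alpha p \<le> length p + 1"
  using alpha_ascent(2) alpha_no_ascent by (metis le_SucI le_refl Suc_eq_plus1)

lemma alpha_le_iff_ascent:
  assumes "j \<le> length p"
  shows "alpha p \<le> j \<longleftrightarrow> (\<exists>i. Suc i < j \<and> p ! i < p ! Suc i)"
proof
  assume "alpha p \<le> j"
  then obtain j' where "j' \<in> {2..length p}" "p ! (j' - 2) < p ! (j' - 1)"
    using assms alpha_no_ascent by fastforce
  from alpha_ascent[OF this] show "\<exists>i. Suc i < j \<and> p ! i < p ! Suc i"
    using \<open>alpha p \<le> j\<close> by (intro exI[of _ "alpha p - 2"]) (auto simp: Suc_diff_Suc numeral_2_eq_2)
next
  assume "\<exists>i. Suc i < j \<and> p ! i < p ! Suc i"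
  then obtain i where i: "Suc i < j" "p ! i < p ! Suc i"
    by blast
  then have "alpha p \<in> {2..Suc (Suc i)}"
    using assms by (intro alpha_ascent(1)) auto
  then show "alpha p \<le> j"
    using i by simp
qed

lemma less_alpha_iff:
  assumes "j \<le> length p"
  shows "j < alpha p \<longleftrightarrow> sorted_wrt (\<ge>) (take j p)"
proof -
  have "sorted_wrt (\<ge>) (take j p) \<longleftrightarrow> (\<forall>i. Suc i < j \<longrightarrow> p ! Suc i \<le> p ! i)"
    using assms by (simp add: sorted_wrt_iff_nth_Suc_transp transp_on_def min_def)
  then show ?thesis
    using alpha_le_iff_ascent[OF assms] by (auto simp: not_le)
qed

lemma is_perm_insert_max:
  assumes "is_perm n p" and "j \<le> n"
  shows "is_perm (Suc n) (take j p @ Suc n # drop j p)"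
proof -
  have "set (take j p) \<union> set (drop j p) = set p"
    by (metis append_take_drop_id set_append)
  then show ?thesis
    using assms by (auto simp: is_perm_def)
qed

lemma in_class_perm:
  assumes "in_class k n p"
  shows "length p = n" and "set p = {1..n}" and "distinct p"
  using assms by (auto simp: in_class_def is_perm_def card_distinct)

lemma in_class_max_position:
  assumes "in_class k n p" and "1 \<le> n"
  obtains t where "t < k" and "t < n" and "p ! t = n"
proof -
  have len: "length p = n" and setp: "set p = {1..n}" and dist: "distinct p"
    using in_class_perm[OF assms(1)] by auto
  obtain t where t: "t < n" "p ! t = n"
    using setp len assms(2) by (metis atLeastAtMost_iff in_set_conv_nth order_refl)
  let ?xs = "take t p" and ?ys = "drop (Suc t) p"
  have split_at_max: "p = ?xs @ n # ?ys"
    using t len id_take_nth_drop by metis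
  have "n \<notin> set ?xs"
    using dist split_at_max by (metis distinct_append not_distinct_conv_prefix)
  moreover have "set ?xs \<subseteq> {1..n}"
    using setp set_take_subset by metis
  ultimately have below: "\<forall>x\<in>set ?xs. x < n"
    by (metis atLeastAtMost_iff nat_less_le subsetD)
  have "\<not> contains ?xs [1, 2]"
    using assms(1) split_at_max contains_append_greater[OF _ _ below, of "[1, 2]" 3 ?ys]
    by (auto simp: in_class_def avoids_def)
  then have "sorted_wrt (>) ?xs"
    using dist contains_12_iff sorted_wrt_greater_if_distinct by (metis distinct_take)
  moreover have "\<not> contains ?xs (rev [1..<k + 1])"
    using assms(1) split_at_max contains_append_greater[OF _ _ below, of "rev [1..<k + 1]" "k + 1" ?ys]
    by (auto simp: in_class_def avoids_def dec_pat_def simp del: upt_Suc)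
  ultimately have "t < k"
    using contains_rev_upt_iff t len by fastforce
  then show ?thesis
    using t that by blast
qed

lemma insert_site_in_class_iff:
  assumes "in_class k n p" and "j \<le> n"
  shows "in_class k (Suc n) (insert_site p (Suc j)) \<longleftrightarrow> j < alpha p \<and> j < k"
proof -
  let ?xs = "take j p" and ?ys = "drop j p"
  have len: "length p = n" and setp: "set p = {1..n}" and dist: "distinct p"
    using in_class_perm[OF assms(1)] by auto
  have avoid_p: "avoids (?xs @ ?ys) ([1, 2] @ [3])" "avoids (?xs @ ?ys) (rev [1..<k + 1] @ [k + 1])"
    using assms(1) by (simp_all add: in_class_def dec_pat_def del: upt_Suc)
  have below: "\<forall>x\<in>set (?xs @ ?ys). x < Suc n"
    using setp by auto
  have "in_class k (Suc n) (insert_site p (Suc j)) \<longleftrightarrow>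
      avoids ?xs [1, 2] \<and> avoids ?xs (rev [1..<k + 1])"
    using avoids_insert_greater_iff[OF avoid_p(1) below]
      avoids_insert_greater_iff[OF avoid_p(2) below]
      is_perm_insert_max[of n p j] assms len setp
    by (simp add: insert_site_def in_class_def is_perm_def dec_pat_def del: upt_Suc)
  also have "\<dots> \<longleftrightarrow> sorted_wrt (\<ge>) ?xs \<and> \<not> contains ?xs (rev [1..<k + 1])"
    unfolding avoids_def contains_12_iff by simp
  also have "\<dots> \<longleftrightarrow> j < alpha p \<and> j < k"
  proof (cases "sorted_wrt (\<ge>) ?xs")
    case True
    then have "sorted_wrt (>) ?xs"
      using dist by (simp add: sorted_wrt_greater_if_distinct)
    then show ?thesis
      using True contains_rev_upt_iff[of ?xs k] less_alpha_iff[of j p] assms(2) len by auto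
  next
    case False
    then show ?thesis
      using less_alpha_iff[of j p] assms(2) len by simp
  qed
  finally show ?thesis .
qed

lemma active_sites_in_class:
  assumes "in_class k n p"
  shows "active_sites k p = {1..min (alpha p) k}"
proof (intro set_eqI)
  have len: "length p = n"
    using in_class_perm[OF assms] by simp
  fix i
  show "i \<in> active_sites k p \<longleftrightarrow> i \<in> {1..min (alpha p) k}"
  proof (cases i)
    case 0
    then show ?thesis
      by (simp add: active_sites_def)
  next
    case (Suc j)
    show ?thesis
    proof (cases "j \<le> n")
      case True
      then show ?thesis
        using Suc insert_site_in_class_iff[OF assms True] len by (auto simp: active_sites_def)
    next
      case False
      then show ?thesis
        using Suc alpha_le_length[of p] len by (auto simp: active_sites_def)
    qed
  qed
qed

theorem mainTheorem2:
  fixes k n :: nat and p :: "nat list"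
  assumes "k \<ge> 2" and "n \<ge> 1" and "in_class k n p"
  shows "(\<exists>j\<in>{1..k}. j \<le> n \<and> p ! (j - 1) = n) \<and>
         active_sites k p = {1..min (alpha p) k}"
proof
  obtain t where "t < k" "t < n" "p ! t = n"
    using in_class_max_position[OF assms(3,2)] .
  then show "\<exists>j\<in>{1..k}. j \<le> n \<and> p ! (j - 1) = n"
    by (intro bexI[of _ "Suc t"]) auto
  show "active_sites k p = {1..min (alpha p) k}"
    using active_sites_in_class[OF assms(3)] .
qed

end
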